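(* Let $g$ be a positive integer, let $l\ge 1$, and let $(a,a+g)$ be a consecutive prospective prime pair with gap $g$ in $S_l$. Let $k>l$ and let $\mathring{n}_k^g$ denote the number of pairs in $S_k$ derived from $(a,a+g)$, i.e. the number of tuples $(m_{l+1},\dots,m_k)$ of integers with $0\le m_j\le P_j-1$ such that, with $M=\sum_{j=l+1}^{k}m_jP_{j-1}\#$, both $a+M$ and $a+g+M$ are coprime to $P_k\#$. Then \[\mathring{n}_k^g=\prod_{i=l+1}^{k}(P_i-2)\cdot\prod_{\substack{i=l+1\\ P_i\mid g}}^{k}\frac{P_i-1}{P_i-2}.\]
   Context: $P_k$ denotes the $k$-th prime ($P_1=2$) and $P_k\#=\prod_{i=1}^k P_i$. $S_k=\{N\in\mathbb{N}: 5\le N\le 4+P_k\#\}$. A prospective prime in $S_k$ is an $N\in S_k$ with $\gcd(N,P_k\#)=1$. Two prospective primes $a<b$ in $S_k$ are consecutive if no integer strictly between them is coprime to $P_k\#$; a consecutive prospective prime pair with gap $g$ in $S_k$ is a pair $(a,a+g)$ of consecutive prospective primes in $S_k$. *)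

theory Defs
  imports Complex_Main "HOL-Computational_Algebra.Primes" "HOL-Library.Infinite_Set"
begin

text \<open>P k is the k-th prime, 1-indexed: P 1 = 2.\<close>
definition P :: "nat \<Rightarrow> nat" where
  "P k = enumerate {p::nat. prime p} (k - 1)"

definition primorial :: "nat \<Rightarrow> nat" where
  "primorial k = (\<Prod>i\<in>{1..k}. P i)"

definition S :: "nat \<Rightarrow> nat set" where
  "S k = {N. 5 \<le> N \<and> N \<le> 4 + primorial k}"

definition prospective_prime :: "nat \<Rightarrow> nat \<Rightarrow> bool" where
  "prospective_prime k N \<longleftrightarrow> N \<in> S k \<and> coprime N (primorial k)"

definition consec_pair :: "nat \<Rightarrow> nat \<Rightarrow> nat \<Rightarrow> bool" where
  "consec_pair k g a \<longleftrightarrow> 0 < g \<and> prospective_prime k a \<and> prospective_prime k (a + g) \<and>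
     (\<forall>n. a < n \<and> n < a + g \<longrightarrow> \<not> coprime n (primorial k))"

text \<open>Number of derived pairs in S_k: tuples (m_{l+1},...,m_k), encoded as functions
  vanishing outside {l+1..k}.\<close>
definition derived_count :: "nat \<Rightarrow> nat \<Rightarrow> nat \<Rightarrow> nat \<Rightarrow> nat" where
  "derived_count l k g a = card {m :: nat \<Rightarrow> nat.
      (\<forall>j\<in>{l+1..k}. m j \<le> P j - 1) \<and> (\<forall>j. j \<notin> {l+1..k} \<longrightarrow> m j = 0) \<and>
      (let M = (\<Sum>j=l+1..k. m j * primorial (j - 1)) in
        coprime (a + M) (primorial k) \<and> coprime (a + g + M) (primorial k))}"

end

(*
  Pass from P_n# to P_(n+1)# and write p = P_(n+1). A derived tuple for P_n# with shift M extends
  by a digit r < p to the shift M + r P_n#; coprimality to P_n# does not depend on r, so the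
  admissible digits are those r for which p divides neither a + M + r P_n# nor a + g + M + r P_n#.
  Since P_n# is coprime to p, each of these two progressions hits a multiple of p for exactly one
  r < p, and the two excluded digits coincide iff p divides g. So every step multiplies the count
  by p - 2, or by p - 1 when p divides g.
*)
theory Submission
  imports Defs "HOL-Number_Theory.Cong"
begin

lemma P_prime: "prime (P i)"
  unfolding P_def using enumerate_in_set[of "{p::nat. prime p}"] primes_infinite by simp

lemma P_1: "P 1 = 2"
proof -
  have "(LEAST n::nat. prime n) = 2"
    by (rule Least_equality) (auto simp: prime_ge_2_nat)
  then show ?thesis
    unfolding P_def by (simp add: enumerate_0)
qed

lemma P_less: "1 \<le> i \<Longrightarrow> i < j \<Longrightarrow> P i < P j"
  unfolding P_def using strict_mono_enumerate[OF primes_infinite]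
  by (simp add: strict_mono_def)

lemma P_gt_2: "2 \<le> i \<Longrightarrow> 2 < P i"
  using P_less[of 1 i] P_1 by simp

lemma primorial_Suc: "primorial (Suc n) = primorial n * P (Suc n)"
  unfolding primorial_def by simp

lemma coprime_primorial_P_Suc: "coprime (primorial n) (P (Suc n))"
  unfolding primorial_def
proof (rule prod_coprime_left)
  fix i assume "i \<in> {1..n}"
  then have "P i \<noteq> P (Suc n)"
    using P_less[of i "Suc n"] by simp
  then show "coprime (P i) (P (Suc n))"
    by (intro primes_coprime P_prime)
qed

lemma coprime_prime_right_iff: "prime p \<Longrightarrow> coprime z p \<longleftrightarrow> \<not> p dvd z"
  for p z :: nat
  by (metis coprime_commute not_prime_unit prime_imp_coprime coprime_common_divisor dvd_refl)

lemma coprime_primorial_Suc_iff: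
  "coprime z (primorial (Suc n)) \<longleftrightarrow> coprime z (primorial n) \<and> \<not> P (Suc n) dvd z"
  by (simp add: primorial_Suc coprime_prime_right_iff[OF P_prime])

lemma coprime_add_mult_self_iff: "coprime (z + r * Q) Q \<longleftrightarrow> coprime z Q"
  for z r Q :: nat
  by (meson coprime_def dvd_add_left_iff dvd_mult)

lemma card_multiples_in_progression:
  fixes n Q x :: nat
  assumes "coprime Q n" and "0 < n"
  shows "card {r\<in>{0..<n}. n dvd x + r * Q} = 1"
proof -
  define h where "h r = (x + r * Q) mod n" for r
  have inj: "inj_on h {0..<n}"
  proof (rule inj_onI)
    fix r s assume "r \<in> {0..<n}" "s \<in> {0..<n}" "h r = h s"
    then have "[x + r * Q = x + s * Q] (mod n)"
      by (simp add: h_def cong_def)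
    then have "[r = s] (mod n)"
      using assms(1) by (simp add: cong_add_lcancel_nat cong_mult_rcancel_nat)
    then show "r = s"
      using \<open>r \<in> {0..<n}\<close> \<open>s \<in> {0..<n}\<close> by (simp add: cong_less_modulus_unique_nat)
  qed
  have "h ` {0..<n} = {0..<n}"
    by (rule endo_inj_surj) (use inj assms(2) in \<open>auto simp: h_def\<close>)
  then obtain r0 where r0: "r0 \<in> {0..<n}" "h r0 = 0"
    using assms(2) by (metis atLeastLessThan_iff imageE zero_le)
  then have "{r\<in>{0..<n}. h r = 0} = {r0}"
    using inj by (auto simp: inj_on_def)
  moreover have "n dvd x + r * Q \<longleftrightarrow> h r = 0" for r
    by (simp add: h_def dvd_eq_mod_eq_0)
  ultimately show ?thesis
    by simp
qed

definition sieve_digits :: "nat \<Rightarrow> nat \<Rightarrow> nat \<Rightarrow> nat \<Rightarrow> nat set" where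
  "sieve_digits n Q x y = {r\<in>{0..<n}. \<not> n dvd x + r * Q \<and> \<not> n dvd y + r * Q}"

lemma card_sieve_digits:
  assumes "coprime Q n" and "0 < n"
  shows "card (sieve_digits n Q x y) = (if [x = y] (mod n) then n - 1 else n - 2)"
proof -
  define Z where "Z z = {r\<in>{0..<n}. n dvd z + r * Q}" for z
  obtain u where u: "Z x = {u}"
    using card_multiples_in_progression[OF assms] card_1_singletonE unfolding Z_def by blast
  obtain v where v: "Z y = {v}"
    using card_multiples_in_progression[OF assms] card_1_singletonE unfolding Z_def by blast
  have "Z x = Z y \<longleftrightarrow> [x = y] (mod n)"
  proof
    assume "Z x = Z y"
    then have "[x + u * Q = 0] (mod n)" "[y + u * Q = 0] (mod n)"
      using u v by (auto simp: Z_def cong_0_iff)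
    then show "[x = y] (mod n)"
      by (metis cong_add_rcancel_nat cong_sym cong_trans)
  next
    assume "[x = y] (mod n)"
    then have "n dvd x + r * Q \<longleftrightarrow> n dvd y + r * Q" for r
      by (intro cong_dvd_iff cong_add cong_refl)
    then show "Z x = Z y"
      by (simp add: Z_def)
  qed
  then have "card (Z x \<union> Z y) = (if [x = y] (mod n) then 1 else 2)"
    using u v by auto
  moreover have "card (sieve_digits n Q x y) = n - card (Z x \<union> Z y)"
  proof -
    have "sieve_digits n Q x y = {0..<n} - (Z x \<union> Z y)"
      by (auto simp: sieve_digits_def Z_def)
    moreover have "Z x \<union> Z y \<subseteq> {0..<n}"
      by (auto simp: Z_def)
    ultimately show ?thesis
      using u v by (simp add: card_Diff_subset)
  qed
  ultimately show ?thesis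
    by simp
qed

definition tuple_shift :: "nat \<Rightarrow> nat \<Rightarrow> (nat \<Rightarrow> nat) \<Rightarrow> nat" where
  "tuple_shift l k m = (\<Sum>j=l+1..k. m j * primorial (j - 1))"

definition derived_tuples :: "nat \<Rightarrow> nat \<Rightarrow> nat \<Rightarrow> nat \<Rightarrow> (nat \<Rightarrow> nat) set" where
  "derived_tuples l k x y = {m.
      (\<forall>j\<in>{l+1..k}. m j < P j) \<and> (\<forall>j. j \<notin> {l+1..k} \<longrightarrow> m j = 0) \<and>
      coprime (x + tuple_shift l k m) (primorial k) \<and> coprime (y + tuple_shift l k m) (primorial k)}"

lemma tuple_shift_Suc:
  "l \<le> n \<Longrightarrow> tuple_shift l (Suc n) m = tuple_shift l n m + m (Suc n) * primorial n"
  unfolding tuple_shift_def by simp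

lemma tuple_shift_fun_upd_Suc: "tuple_shift l n (m(Suc n := r)) = tuple_shift l n m"
  unfolding tuple_shift_def by (rule sum.cong) auto

lemma coprime_tuple_shift_Suc_iff:
  assumes "l \<le> n"
  shows "coprime (x + tuple_shift l (Suc n) m) (primorial (Suc n)) \<longleftrightarrow>
    coprime (x + tuple_shift l n m) (primorial n) \<and>
    \<not> P (Suc n) dvd x + tuple_shift l n m + m (Suc n) * primorial n"
  using coprime_add_mult_self_iff[of "x + tuple_shift l n m" "m (Suc n)" "primorial n"]
  by (simp add: coprime_primorial_Suc_iff tuple_shift_Suc[OF assms] add.assoc)

lemma derived_tuples_Suc_iff:
  assumes "l \<le> n"
  shows "m \<in> derived_tuples l (Suc n) x y \<longleftrightarrow> m(Suc n := 0) \<in> derived_tuples l n x y \<and>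
    m (Suc n) \<in> sieve_digits (P (Suc n)) (primorial n) (x + tuple_shift l n m) (y + tuple_shift l n m)"
proof -
  have "{l+1..Suc n} = insert (Suc n) {l+1..n}"
    using assms by auto
  then show ?thesis
    unfolding derived_tuples_def sieve_digits_def coprime_tuple_shift_Suc_iff[OF assms]
    by (auto simp: tuple_shift_fun_upd_Suc split: if_splits)
qed

lemma inj_on_fun_upd_Sigma:
  fixes i :: 'a and z :: 'b
  shows "inj_on (\<lambda>(m, r). m(i := r)) (SIGMA m:{m. m i = z}. B m)"
proof (rule inj_onI, clarify)
  fix m m' :: "'a \<Rightarrow> 'b" and r r' :: 'b
  assume eq: "m(i := r) = m'(i := r')" and "m' i = m i"
  then have "m = m'"
    by (metis fun_upd_triv fun_upd_upd)
  moreover have "r = r'"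
    using fun_cong[OF eq, of i] by simp
  ultimately show "m = m' \<and> r = r'" ..
qed

lemma derived_tuples_Suc:
  assumes "l \<le> n"
  shows "derived_tuples l (Suc n) x y = (\<lambda>(m, r). m(Suc n := r)) `
    (SIGMA m:derived_tuples l n x y.
      sieve_digits (P (Suc n)) (primorial n) (x + tuple_shift l n m) (y + tuple_shift l n m))"
    (is "?D = ?extend ` ?S")
proof (intro equalityI subsetI)
  fix m assume "m \<in> ?D"
  then show "m \<in> ?extend ` ?S"
    unfolding derived_tuples_Suc_iff[OF assms]
    by (intro image_eqI[of _ _ "(m(Suc n := 0), m (Suc n))"]) (auto simp: tuple_shift_fun_upd_Suc)
next
  fix m' assume "m' \<in> ?extend ` ?S"
  then obtain m r where "m' = m(Suc n := r)" "m \<in> derived_tuples l n x y"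
    "r \<in> sieve_digits (P (Suc n)) (primorial n) (x + tuple_shift l n m) (y + tuple_shift l n m)"
    by force
  moreover from \<open>m \<in> derived_tuples l n x y\<close> have "m(Suc n := 0) = m"
    by (auto simp: derived_tuples_def)
  ultimately show "m' \<in> ?D"
    unfolding derived_tuples_Suc_iff[OF assms] by (simp add: tuple_shift_fun_upd_Suc)
qed

lemma derived_tuples_base:
  assumes "coprime x (primorial l)" and "coprime y (primorial l)"
  shows "derived_tuples l l x y = {\<lambda>_. 0}"
  using assms by (auto simp: derived_tuples_def tuple_shift_def)

lemma finite_card_derived_tuples:
  assumes "l \<le> k" and "coprime x (primorial l)" and "coprime y (primorial l)"
  shows "finite (derived_tuples l k x y) \<and>
    card (derived_tuples l k x y) = (\<Prod>i=l+1..k. if [x = y] (mod P i) then P i - 1 else P i - 2)"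
  using assms(1)
proof (induction k rule: dec_induct)
  case base
  show ?case
    using derived_tuples_base[OF assms(2,3)] by simp
next
  case (step n)
  define D where "D = derived_tuples l n x y"
  define R where "R m = sieve_digits (P (Suc n)) (primorial n) (x + tuple_shift l n m) (y + tuple_shift l n m)"
    for m
  have "derived_tuples l (Suc n) x y = (\<lambda>(m, r). m(Suc n := r)) ` Sigma D R"
    unfolding D_def R_def by (rule derived_tuples_Suc[OF step.hyps(1)])
  moreover have "inj_on (\<lambda>(m, r). m(Suc n := r)) (Sigma D R)"
    by (rule inj_on_subset[OF inj_on_fun_upd_Sigma]) (auto simp: D_def derived_tuples_def)
  moreover have "card (R m) = (if [x = y] (mod P (Suc n)) then P (Suc n) - 1 else P (Suc n) - 2)"
    for m
    unfolding R_def
    by (simp add: card_sieve_digits coprime_primorial_P_Suc prime_gt_0_nat[OF P_prime]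
        cong_add_rcancel_nat)
  moreover have "finite (R m)" for m
    by (simp add: R_def sieve_digits_def)
  ultimately show ?case
    using step.IH step.hyps(1) by (simp add: D_def card_image)
qed

lemma derived_count_eq_card: "derived_count l k g a = card (derived_tuples l k a (a + g))"
proof -
  have "m \<le> P j - 1 \<longleftrightarrow> m < P j" for m j
    using prime_gt_0_nat[OF P_prime[of j]] by linarith
  then show ?thesis
    unfolding derived_count_def derived_tuples_def tuple_shift_def Let_def by simp
qed

lemma prod_of_nat_if_minus_1_minus_2:
  fixes f :: "'a \<Rightarrow> nat"
  assumes "finite A" and "\<forall>i\<in>A. 2 < f i"
  shows "(\<Prod>i\<in>A. real (if Q i then f i - 1 else f i - 2)) =
    (\<Prod>i\<in>A. real (f i) - 2) * (\<Prod>i\<in>{i\<in>A. Q i}. (real (f i) - 1) / (real (f i) - 2))"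
proof -
  have "(\<Prod>i\<in>A. real (if Q i then f i - 1 else f i - 2)) =
      (\<Prod>i\<in>A. (real (f i) - 2) * (if Q i then (real (f i) - 1) / (real (f i) - 2) else 1))"
    using assms(2) by (intro prod.cong) auto
  also have "\<dots> = (\<Prod>i\<in>A. real (f i) - 2) * (\<Prod>i\<in>{i\<in>A. Q i}. (real (f i) - 1) / (real (f i) - 2))"
    by (simp add: prod.distrib prod.inter_filter assms(1))
  finally show ?thesis .
qed

theorem theorem1:
  fixes g l k a :: nat
  assumes "0 < g" and "1 \<le> l" and "consec_pair l g a" and "l < k"
  shows "real (derived_count l k g a) =
    (\<Prod>i=l+1..k. real (P i) - 2) *
    (\<Prod>i\<in>{i. l+1 \<le> i \<and> i \<le> k \<and> P i dvd g}. (real (P i) - 1) / (real (P i) - 2))"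
proof -
  have "coprime a (primorial l)" "coprime (a + g) (primorial l)"
    using assms(3) by (auto simp: consec_pair_def prospective_prime_def)
  then have "derived_count l k g a = (\<Prod>i=l+1..k. if P i dvd g then P i - 1 else P i - 2)"
    using finite_card_derived_tuples[of l k a "a + g"] assms(4)
    by (simp add: derived_count_eq_card cong_sym_eq[of a] cong_add_lcancel_0_nat cong_0_iff)
  moreover have "\<forall>i\<in>{l+1..k}. 2 < P i"
    using assms(2) by (auto intro: P_gt_2)
  moreover have "{i. l+1 \<le> i \<and> i \<le> k \<and> P i dvd g} = {i\<in>{l+1..k}. P i dvd g}"
    by auto
  ultimately show ?thesis
    by (simp add: prod_of_nat_if_minus_1_minus_2)
qed

end
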